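(* Let $A$ be a real alternative $^*$-algebra (not necessarily of finite dimension). For each $x\in C_A$: (1) $n(x)=n(x^c)$; (2) if $x\neq 0$ then $x$ is invertible and $x^{-1}=n(x)^{-1}x^c$; (3) $(x,x^c,y)=0$ for all $y\in A$; (4) $n(xy)=n(x)n(y)=n(y)n(x)=n(yx)$ for all $y\in C_A$. As a consequence, $C_A$ and $N_A$ are closed under multiplication and $C_A^*:=C_A\setminus\{0\}$, $N_A^*:=N_A\setminus\{0\}$ are multiplicative loops.
   Context: A real alternative $^*$-algebra is a real vector space $A$ with a bilinear product and a unit $1$ (with $\mathbb{R}$ identified with $\mathbb{R}1$) such that the associator $(x,y,z)=(xy)z-x(yz)$ is an alternating function, equipped with a $^*$-involution $x\mapsto x^c$, i.e. a real linear map with $(x^c)^c=x$, $(xy)^c=y^cx^c$ and $r^c=r$ for $r\in\mathbb{R}$. The norm is $n(x)=xx^c$. The nucleus of $A$ is $\{r\in A:(r,x,y)=0\ \forall x,y\in A\}$ and the center is $\{r$ in the nucleus$: rx=xr\ \forall x\in A\}$. The normal cone is $N_A=\{0\}\cup\{x\in A: n(x),n(x^c)\in\mathbb{R}\setminus\{0\}\}$ and the central cone is $C_A=\{0\}\cup\{x\in A: n(x),n(x^c)$ are invertible elements of the center of $A\}$. *)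

theory Defs
  imports Complex_Main
begin

text \<open>A real alternative star-algebra on a real vector space 'a, given by an explicit
 product mul, unit e and involution cj.  The real numbers are identified with
 the line of multiples r *R e.\<close>

definition assoc :: "('a::real_vector \<Rightarrow> 'a \<Rightarrow> 'a) \<Rightarrow> 'a \<Rightarrow> 'a \<Rightarrow> 'a \<Rightarrow> 'a" where
  "assoc mul x y z = mul (mul x y) z - mul x (mul y z)"

definition alt_star_alg :: "('a::real_vector \<Rightarrow> 'a \<Rightarrow> 'a) \<Rightarrow> 'a \<Rightarrow> ('a \<Rightarrow> 'a) \<Rightarrow> bool" where
  "alt_star_alg mul e cj \<longleftrightarrow>
     \<comment> \<open>bilinearity of the product\<close>
     (\<forall>x y z. mul (x + y) z = mul x z + mul y z) \<and>
     (\<forall>x y z. mul x (y + z) = mul x y + mul x z) \<and>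
     (\<forall>r x y. mul (r *\<^sub>R x) y = r *\<^sub>R mul x y) \<and>
     (\<forall>r x y. mul x (r *\<^sub>R y) = r *\<^sub>R mul x y) \<and>
     \<comment> \<open>unit, with R identified with R e (so e is nonzero)\<close>
     e \<noteq> 0 \<and>
     (\<forall>x. mul e x = x \<and> mul x e = x) \<and>
     \<comment> \<open>the associator is alternating\<close>
     (\<forall>x y. assoc mul x x y = 0 \<and> assoc mul x y x = 0 \<and> assoc mul y x x = 0) \<and>
     \<comment> \<open>star-involution\<close>
     (\<forall>x y. cj (x + y) = cj x + cj y) \<and>
     (\<forall>r x. cj (r *\<^sub>R x) = r *\<^sub>R cj x) \<and>
     (\<forall>x. cj (cj x) = x) \<and>
     (\<forall>x y. cj (mul x y) = mul (cj y) (cj x)) \<and>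
     (\<forall>r. cj (r *\<^sub>R e) = r *\<^sub>R e)"

definition nrm :: "('a \<Rightarrow> 'a \<Rightarrow> 'a) \<Rightarrow> ('a \<Rightarrow> 'a) \<Rightarrow> 'a \<Rightarrow> 'a" where
  "nrm mul cj x = mul x (cj x)"

definition nucleus :: "('a::real_vector \<Rightarrow> 'a \<Rightarrow> 'a) \<Rightarrow> 'a set" where
  "nucleus mul = {r. \<forall>x y. assoc mul r x y = 0}"

definition center :: "('a::real_vector \<Rightarrow> 'a \<Rightarrow> 'a) \<Rightarrow> 'a set" where
  "center mul = {r \<in> nucleus mul. \<forall>x. mul r x = mul x r}"

definition is_inverse :: "('a \<Rightarrow> 'a \<Rightarrow> 'a) \<Rightarrow> 'a \<Rightarrow> 'a \<Rightarrow> 'a \<Rightarrow> bool" where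
  "is_inverse mul e x y \<longleftrightarrow> mul x y = e \<and> mul y x = e"

definition invertible_el :: "('a \<Rightarrow> 'a \<Rightarrow> 'a) \<Rightarrow> 'a \<Rightarrow> 'a \<Rightarrow> bool" where
  "invertible_el mul e x \<longleftrightarrow> (\<exists>y. is_inverse mul e x y)"

text \<open>The inverse x^-1 (meaningful when the two-sided inverse is unique).\<close>
definition inv_el :: "('a \<Rightarrow> 'a \<Rightarrow> 'a) \<Rightarrow> 'a \<Rightarrow> 'a \<Rightarrow> 'a" where
  "inv_el mul e x = (THE y. is_inverse mul e x y)"

definition center_units :: "('a::real_vector \<Rightarrow> 'a \<Rightarrow> 'a) \<Rightarrow> 'a \<Rightarrow> 'a set" where
  "center_units mul e = {r \<in> center mul. \<exists>s \<in> center mul. is_inverse mul e r s}"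

definition normal_cone :: "('a::real_vector \<Rightarrow> 'a \<Rightarrow> 'a) \<Rightarrow> 'a \<Rightarrow> ('a \<Rightarrow> 'a) \<Rightarrow> 'a set" where
  "normal_cone mul e cj = {0} \<union>
     {x. nrm mul cj x \<in> {r *\<^sub>R e | r. r \<noteq> 0} \<and> nrm mul cj (cj x) \<in> {r *\<^sub>R e | r. r \<noteq> 0}}"

definition central_cone :: "('a::real_vector \<Rightarrow> 'a \<Rightarrow> 'a) \<Rightarrow> 'a \<Rightarrow> ('a \<Rightarrow> 'a) \<Rightarrow> 'a set" where
  "central_cone mul e cj = {0} \<union>
     {x. nrm mul cj x \<in> center_units mul e \<and> nrm mul cj (cj x) \<in> center_units mul e}"

definition is_loop :: "'a set \<Rightarrow> ('a \<Rightarrow> 'a \<Rightarrow> 'a) \<Rightarrow> bool" where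
  "is_loop L f \<longleftrightarrow>
     (\<forall>a\<in>L. \<forall>b\<in>L. f a b \<in> L) \<and>
     (\<exists>u\<in>L. \<forall>a\<in>L. f u a = a \<and> f a u = a) \<and>
     (\<forall>a\<in>L. \<forall>b\<in>L. (\<exists>!x. x \<in> L \<and> f a x = b) \<and> (\<exists>!y. y \<in> L \<and> f y a = b))"

end

theory Submission
  imports Defs
begin

text \<open>
  For \<open>x\<close> in the central cone, \<open>x x\<^sup>c\<close> and \<open>x\<^sup>c x\<close> are central units, so they
  coincide, and the alternative laws (via the Teichmueller identity and a Moufang-type
  identity) force the associator \<open>(x, x\<^sup>c, y)\<close> to vanish.  Hence \<open>n(x)\<^sup>-\<^sup>1 x\<^sup>c\<close> is a
  two-sided inverse of \<open>x\<close> that associates with everything, which gives the unique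
  divisions of a loop, and the same vanishing associators make the norm multiplicative
  on the central cone, which gives closure under products.
\<close>

locale alternative_algebra =
  fixes mul :: "'a::real_vector \<Rightarrow> 'a \<Rightarrow> 'a" (infixl "\<odot>" 70)
    and e :: 'a
  assumes mul_add_left: "(x + y) \<odot> z = x \<odot> z + y \<odot> z"
    and mul_add_right: "x \<odot> (y + z) = x \<odot> y + x \<odot> z"
    and mul_scaleR_left: "(r *\<^sub>R x) \<odot> y = r *\<^sub>R (x \<odot> y)"
    and mul_scaleR_right: "x \<odot> (r *\<^sub>R y) = r *\<^sub>R (x \<odot> y)"
    and unit_nonzero: "e \<noteq> 0"
    and mul_unit_left [simp]: "e \<odot> x = x"
    and mul_unit_right [simp]: "x \<odot> e = x"
    and assoc_left_alternative [simp]: "assoc mul x x y = 0"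
    and assoc_flexible [simp]: "assoc mul x y x = 0"
    and assoc_right_alternative [simp]: "assoc mul y x x = 0"
begin

abbreviation associator :: "'a \<Rightarrow> 'a \<Rightarrow> 'a \<Rightarrow> 'a" where
  "associator \<equiv> assoc mul"

lemma mul_zero_left [simp]: "0 \<odot> y = 0"
  using mul_scaleR_left[of 0 y y] by simp

lemma mul_zero_right [simp]: "y \<odot> 0 = 0"
  using mul_scaleR_right[of y 0 y] by simp

lemma mul_minus_left: "(- x) \<odot> y = - (x \<odot> y)"
  using mul_scaleR_left[of "-1" x y] by simp

lemma mul_minus_right: "y \<odot> (- x) = - (y \<odot> x)"
  using mul_scaleR_right[of y "-1" x] by simp

lemma mul_diff_left: "(x - y) \<odot> z = x \<odot> z - y \<odot> z"
  using mul_add_left[of x "- y" z] by (simp add: mul_minus_left)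

lemma mul_diff_right: "z \<odot> (x - y) = z \<odot> x - z \<odot> y"
  using mul_add_right[of z x "- y"] by (simp add: mul_minus_right)

lemma assoc_eq_0_iff: "associator x y z = 0 \<longleftrightarrow> (x \<odot> y) \<odot> z = x \<odot> (y \<odot> z)"
  by (simp add: assoc_def)

lemma assoc_add_left: "associator (x + y) z w = associator x z w + associator y z w"
  and assoc_add_middle: "associator z (x + y) w = associator z x w + associator z y w"
  and assoc_add_right: "associator z w (x + y) = associator z w x + associator z w y"
  unfolding assoc_def mul_add_left mul_add_right by (simp_all add: algebra_simps)

lemma assoc_diff_left: "associator (x - y) z w = associator x z w - associator y z w"
  unfolding assoc_def mul_diff_left mul_diff_right by (simp add: algebra_simps)

lemma assoc_swap_left: "associator x y z = - associator y x z"
proof -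
  have "associator (x + y) (x + y) z
      = associator x x z + associator x y z + (associator y x z + associator y y z)"
    by (simp only: assoc_add_left assoc_add_middle add_ac)
  then have "associator x y z + associator y x z = 0"
    by simp
  then show ?thesis
    by (simp add: eq_neg_iff_add_eq_0)
qed

lemma assoc_swap_right: "associator x y z = - associator x z y"
proof -
  have "associator x (y + z) (y + z)
      = associator x y y + associator x y z + (associator x z y + associator x z z)"
    by (simp only: assoc_add_middle assoc_add_right add_ac)
  then have "associator x y z + associator x z y = 0"
    by simp
  then show ?thesis
    by (simp add: eq_neg_iff_add_eq_0)
qed

lemma assoc_cycle: "associator x y z = associator y z x"
  using assoc_swap_left[of x y z] assoc_swap_right[of y x z] by simp

lemma Teichmueller_identity:
  "associator (w \<odot> x) y z - associator w (x \<odot> y) z + associator w x (y \<odot> z)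
     = w \<odot> associator x y z + associator w x y \<odot> z"
  unfolding assoc_def mul_diff_left mul_diff_right by (simp add: algebra_simps)

text \<open>Adding the three Teichmueller identities obtained by cycling \<open>x, q, r\<close>, the
  alternating associator cancels everything except twice the first claim.\<close>
lemma assoc_square_left:
  "associator (x \<odot> x) q r = x \<odot> associator x q r + associator x q r \<odot> x"
  and assoc_mul_right_Moufang: "associator x q (r \<odot> x) = x \<odot> associator x q r"
proof -
  let ?N = "x \<odot> associator x q r" and ?M = "associator x q r \<odot> x"
  let ?X = "associator (x \<odot> x) q r"
  define P where "P = associator (x \<odot> q) r x"
  define Q where "Q = associator x q (r \<odot> x)"
  have cycled: "associator x (x \<odot> q) r = P" "associator q r x = associator x q r"
    "associator q (r \<odot> x) x = Q" "associator q r (x \<odot> x) = ?X"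
    unfolding P_def Q_def by (metis assoc_cycle)+
  have "?X = ?N + P"
    using Teichmueller_identity[of x x q r] cycled by (simp add: algebra_simps)
  moreover have Q: "?X = ?M + Q"
    using Teichmueller_identity[of q r x x] cycled by (simp add: algebra_simps)
  ultimately have "?X + ?X = (?N + ?M) + (P + Q)"
    by (simp add: algebra_simps)
  also have "P + Q = ?N + ?M"
    using Teichmueller_identity[of x q r x] cycled by (simp add: P_def Q_def)
  finally have "(2::real) *\<^sub>R ?X = 2 *\<^sub>R (?N + ?M)"
    by (simp add: scaleR_2)
  then show X: "?X = ?N + ?M"
    by simp
  show "Q = ?N"
    using X Q by (simp add: algebra_simps Q_def)
qed

subsection \<open>Nucleus and center\<close>

lemma nucleus_assoc_left: "c \<in> nucleus mul \<Longrightarrow> associator c x y = 0"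
  unfolding nucleus_def by blast

lemma nucleus_assoc_middle: "c \<in> nucleus mul \<Longrightarrow> associator x c y = 0"
  using assoc_swap_left[of x c y] nucleus_assoc_left by simp

lemma nucleus_assoc_right: "c \<in> nucleus mul \<Longrightarrow> associator x y c = 0"
  using assoc_cycle[of c x y] nucleus_assoc_left by simp

lemma center_nucleus: "c \<in> center mul \<Longrightarrow> c \<in> nucleus mul"
  unfolding center_def by blast

lemma center_commute: "c \<in> center mul \<Longrightarrow> c \<odot> x = x \<odot> c"
  unfolding center_def by blast

lemma center_mul_assoc: "c \<in> center mul \<Longrightarrow> (c \<odot> p) \<odot> q = c \<odot> (p \<odot> q)"
  using center_nucleus nucleus_assoc_left assoc_eq_0_iff by blast

lemma center_mul_left_commute:
  assumes "c \<in> center mul"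
  shows "p \<odot> (c \<odot> q) = c \<odot> (p \<odot> q)"
proof -
  have "p \<odot> (c \<odot> q) = (p \<odot> c) \<odot> q"
    using assms center_nucleus nucleus_assoc_middle assoc_eq_0_iff by metis
  also have "\<dots> = c \<odot> (p \<odot> q)"
    using assms center_commute center_mul_assoc by metis
  finally show ?thesis .
qed

lemma assoc_center_mul_right: "c \<in> center mul \<Longrightarrow> associator p q (c \<odot> w) = c \<odot> associator p q w"
  by (simp add: assoc_def center_mul_left_commute mul_diff_right)

lemma assoc_center_mul_middle: "c \<in> center mul \<Longrightarrow> associator p (c \<odot> w) q = c \<odot> associator p w q"
  using assoc_center_mul_right assoc_cycle by metis

lemma center_mul_closed:
  assumes "a \<in> center mul" "b \<in> center mul"
  shows "a \<odot> b \<in> center mul"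
proof -
  have "associator (a \<odot> b) p q = 0" for p q
    using Teichmueller_identity[of a b p q] assms center_nucleus nucleus_assoc_left by simp
  moreover have "(a \<odot> b) \<odot> p = p \<odot> (a \<odot> b)" for p
    using assms center_mul_assoc center_mul_left_commute center_commute by metis
  ultimately show ?thesis
    unfolding center_def nucleus_def by blast
qed

lemma center_units_mul_closed:
  assumes "a \<in> center_units mul e" "b \<in> center_units mul e"
  shows "a \<odot> b \<in> center_units mul e"
proof -
  obtain s t where st: "a \<in> center mul" "b \<in> center mul" "s \<in> center mul" "t \<in> center mul"
    "a \<odot> s = e" "s \<odot> a = e" "b \<odot> t = e" "t \<odot> b = e"
    using assms unfolding center_units_def is_inverse_def by blast
  have "(a \<odot> b) \<odot> (s \<odot> t) = e" "(s \<odot> t) \<odot> (a \<odot> b) = e"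
    using st center_mul_assoc center_mul_left_commute by simp_all
  then show ?thesis
    unfolding center_units_def is_inverse_def using center_mul_closed st by blast
qed

lemma scaleR_unit_center: "r *\<^sub>R e \<in> center mul"
  unfolding center_def nucleus_def assoc_def by (simp add: mul_scaleR_left mul_scaleR_right)

lemma scaleR_unit_center_units:
  assumes "r \<noteq> 0"
  shows "r *\<^sub>R e \<in> center_units mul e"
proof -
  have "is_inverse mul e (r *\<^sub>R e) (inverse r *\<^sub>R e)"
    using assms unfolding is_inverse_def by (simp add: mul_scaleR_left mul_scaleR_right)
  then show ?thesis
    unfolding center_units_def using scaleR_unit_center by blast
qed

text \<open>Flexibility gives \<open>(x u) x = x (u x)\<close>, so \<open>x (x u - u x) = 0\<close>; multiplying by \<open>u\<close>
  and then by the left inverse of \<open>u x\<close> kills the difference.\<close>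
lemma central_products_eq:
  assumes xu: "x \<odot> u = a" and ux: "u \<odot> x = b"
    and a: "a \<in> center mul" and b: "b \<in> center mul" and tb: "t \<odot> b = e"
  shows "a = b"
proof -
  have "a \<odot> x = x \<odot> b"
    using assoc_flexible[of x u] xu ux unfolding assoc_eq_0_iff by simp
  then have xab: "x \<odot> (a - b) = 0"
    using center_commute[OF a] by (simp add: mul_diff_right)
  have "a - b \<in> nucleus mul"
    unfolding nucleus_def using a b center_nucleus nucleus_assoc_left by (simp add: assoc_diff_left)
  then have "b \<odot> (a - b) = u \<odot> (x \<odot> (a - b))"
    using ux nucleus_assoc_right assoc_eq_0_iff by metis
  then have "t \<odot> (b \<odot> (a - b)) = 0"
    using xab by simp
  moreover have "t \<odot> (b \<odot> (a - b)) = (t \<odot> b) \<odot> (a - b)"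
    using nucleus_assoc_middle[OF center_nucleus[OF b]] unfolding assoc_eq_0_iff by simp
  ultimately show ?thesis
    using tb by simp
qed

lemma assoc_mul_left_eq_0_if_central:
  assumes xu: "x \<odot> u = a" and a: "a \<in> center mul"
  shows "associator x u z \<odot> x = 0"
proof -
  have "(x \<odot> x) \<odot> u = a \<odot> x"
    using assoc_left_alternative[of x u] xu center_commute[OF a] unfolding assoc_eq_0_iff by simp
  moreover have "x \<odot> (u \<odot> z) = a \<odot> z - associator x u z"
    by (simp add: assoc_def xu)
  moreover have "(x \<odot> x) \<odot> (u \<odot> z) = x \<odot> (x \<odot> (u \<odot> z))"
    using assoc_left_alternative unfolding assoc_eq_0_iff .
  ultimately have "associator (x \<odot> x) u z = x \<odot> associator x u z"
    using a unfolding assoc_def[of mul "x \<odot> x"]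
    by (simp add: mul_diff_right center_mul_assoc center_mul_left_commute)
  then show ?thesis
    using assoc_square_left[of x u z] by simp
qed

lemma assoc_right_mul_eq_0_if_central:
  assumes xu: "x \<odot> u = a" and ux: "u \<odot> x = a" and a: "a \<in> center mul"
  shows "associator x u (z \<odot> x) = 0"
proof -
  have "associator (z \<odot> x) u x = 0"
    using Teichmueller_identity[of z x u x] assoc_cycle[of z x u]
      assoc_mul_left_eq_0_if_central[OF xu a, of z] xu ux
      nucleus_assoc_middle[OF center_nucleus[OF a]] nucleus_assoc_right[OF center_nucleus[OF a]]
    by simp
  then show ?thesis
    using assoc_cycle[of "z \<odot> x" u x] assoc_swap_left[of u x] by simp
qed

text \<open>Writing \<open>y = (s (y u)) x + s (x, u, y)\<close> with \<open>s = a\<^sup>-\<^sup>1\<close>, the first summand is killed by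
  \<open>(x, u, -)\<close>, so \<open>D = (x, u, y)\<close> satisfies \<open>D = s (x, u, D) = -D\<close>.\<close>
lemma assoc_eq_0_if_central_unit:
  assumes xu: "x \<odot> u = a" and ux: "u \<odot> x = a" and a: "a \<in> center mul"
    and s: "s \<in> center mul" and sa: "s \<odot> a = e"
  shows "associator x u y = 0"
proof -
  define D where "D = associator x u y"
  have "associator y u x = - D"
    using assoc_cycle[of y u x] assoc_swap_left[of u x y] by (simp add: D_def)
  then have "(y \<odot> u) \<odot> x = a \<odot> y - D"
    using ux center_commute[OF a] unfolding assoc_def by (simp add: algebra_simps)
  then have "y = (s \<odot> (y \<odot> u)) \<odot> x + s \<odot> D"
    using s sa center_mul_assoc[OF s, of a y] center_mul_assoc[OF s] by (simp add: mul_diff_right)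
  then have "D = associator x u ((s \<odot> (y \<odot> u)) \<odot> x + s \<odot> D)"
    unfolding D_def by (rule arg_cong)
  also have "\<dots> = s \<odot> associator x u D"
    using assoc_right_mul_eq_0_if_central[OF xu ux a] assoc_center_mul_right[OF s]
    by (simp add: assoc_add_right)
  also have "associator x u D = (D \<odot> x) \<odot> u - D \<odot> (x \<odot> u)"
    using assoc_cycle[of D x u] by (simp add: assoc_def)
  also have "\<dots> = - (D \<odot> a)"
    using assoc_mul_left_eq_0_if_central[OF xu a, of y] xu by (simp add: D_def)
  finally have "D = - (s \<odot> (D \<odot> a))"
    by (simp add: mul_minus_right)
  also have "s \<odot> (D \<odot> a) = D"
    using center_commute[OF a, of D] center_mul_assoc[OF s, of a D] sa by simp
  finally have "D = - D" .
  then show ?thesis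
    unfolding D_def by (simp add: eq_neg_iff_add_eq_0 flip: scaleR_2)
qed

text \<open>The unique solutions of \<open>a x = b\<close> and \<open>y a = b\<close> are \<open>v b\<close> and \<open>b v\<close>.\<close>
lemma is_loopI_nuclear_inverses:
  assumes closed: "\<forall>a\<in>L. \<forall>b\<in>L. a \<odot> b \<in> L" and unit: "e \<in> L"
    and inverse: "\<And>a. a \<in> L \<Longrightarrow> \<exists>v\<in>L. a \<odot> v = e \<and> v \<odot> a = e \<and> (\<forall>z. associator a v z = 0)"
  shows "is_loop L mul"
  unfolding is_loop_def
proof (intro conjI ballI)
  show "\<exists>u\<in>L. \<forall>a\<in>L. u \<odot> a = a \<and> a \<odot> u = a"
    using unit by (intro bexI[OF _ unit]) simp
next
  fix a b assume a: "a \<in> L" and b: "b \<in> L"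
  then obtain v where v: "v \<in> L" "a \<odot> v = e" "v \<odot> a = e" "\<And>z. associator a v z = 0"
    using inverse by blast
  have "associator v a z = 0" "associator z a v = 0" "associator z v a = 0" for z
    using v(4)[of z] assoc_swap_left[of v a z] assoc_cycle[of z a v] assoc_cycle[of v a z]
      assoc_cycle[of z v a]
    by simp_all
  then have assoc_va: "(v \<odot> a) \<odot> z = v \<odot> (a \<odot> z)" and assoc_av: "(z \<odot> a) \<odot> v = z \<odot> (a \<odot> v)"
    and assoc_right_va: "(z \<odot> v) \<odot> a = z \<odot> (v \<odot> a)" for z
    unfolding assoc_eq_0_iff by simp_all
  show "\<exists>!x. x \<in> L \<and> a \<odot> x = b"
  proof (rule ex1I[of _ "v \<odot> b"])
    show "v \<odot> b \<in> L \<and> a \<odot> (v \<odot> b) = b"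
      using closed v b v(4)[of b] unfolding assoc_eq_0_iff by simp
  next
    fix x assume "x \<in> L \<and> a \<odot> x = b"
    then show "x = v \<odot> b"
      using assoc_va[of x] v(3) by simp
  qed
  show "\<exists>!y. y \<in> L \<and> y \<odot> a = b"
  proof (rule ex1I[of _ "b \<odot> v"])
    show "b \<odot> v \<in> L \<and> (b \<odot> v) \<odot> a = b"
      using closed v b assoc_right_va[of b] by simp
  next
    fix y assume "y \<in> L \<and> y \<odot> a = b"
    then show "y = b \<odot> v"
      using assoc_av[of y] v(2) by simp
  qed
qed (use closed in auto)

lemma inv_el_eqI:
  assumes "x \<odot> v = e" "v \<odot> x = e" "\<And>z. associator v x z = 0"
  shows "inv_el mul e x = v"
  unfolding inv_el_def
proof (rule the_equality)
  show "is_inverse mul e x v"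
    using assms unfolding is_inverse_def by simp
next
  fix w assume "is_inverse mul e x w"
  then have "x \<odot> w = e"
    unfolding is_inverse_def by simp
  then show "w = v"
    using assms(2) assms(3)[of w] unfolding assoc_eq_0_iff by simp
qed

end

subsection \<open>The central and normal cones\<close>

locale alternative_star_algebra = alternative_algebra +
  fixes cj :: "'a \<Rightarrow> 'a"
  assumes cj_add: "cj (x + y) = cj x + cj y"
    and cj_scaleR: "cj (r *\<^sub>R x) = r *\<^sub>R cj x"
    and cj_cj [simp]: "cj (cj x) = x"
    and cj_mul: "cj (x \<odot> y) = cj y \<odot> cj x"
    and cj_scaleR_unit: "cj (r *\<^sub>R e) = r *\<^sub>R e"
begin

abbreviation nr :: "'a \<Rightarrow> 'a" where "nr \<equiv> nrm mul cj"
abbreviation CC :: "'a set" where "CC \<equiv> central_cone mul e cj"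
abbreviation NN :: "'a set" where "NN \<equiv> normal_cone mul e cj"

lemma cj_unit [simp]: "cj e = e"
  using cj_scaleR_unit[of 1] by simp

lemma cj_zero [simp]: "cj 0 = 0"
  using cj_scaleR[of 0 0] by simp

lemma cj_diff: "cj (x - y) = cj x - cj y"
  using cj_add[of x "- y"] cj_scaleR[of "-1" y] by simp

lemma cj_assoc: "cj (associator x y z) = - associator (cj z) (cj y) (cj x)"
  by (simp add: assoc_def cj_diff cj_mul)

lemma cj_center:
  assumes "r \<in> center mul"
  shows "cj r \<in> center mul"
proof -
  have "associator (cj r) p q = - cj (associator (cj q) (cj p) r)" for p q
    using cj_assoc[of "cj q" "cj p" r] by simp
  then have "associator (cj r) p q = 0" for p q
    using nucleus_assoc_right[OF center_nucleus[OF assms]] by simp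
  moreover have "cj r \<odot> p = p \<odot> cj r" for p
    using cj_mul[of "cj p" r] cj_mul[of r "cj p"] center_commute[OF assms, of "cj p"] by simp
  ultimately show ?thesis
    unfolding center_def nucleus_def by blast
qed

lemma cj_center_units:
  assumes "r \<in> center_units mul e"
  shows "cj r \<in> center_units mul e"
proof -
  obtain s where s: "r \<in> center mul" "s \<in> center mul" "r \<odot> s = e" "s \<odot> r = e"
    using assms unfolding center_units_def is_inverse_def by blast
  then have "cj r \<odot> cj s = e" "cj s \<odot> cj r = e"
    using cj_mul cj_unit by metis+
  then show ?thesis
    unfolding center_units_def is_inverse_def using cj_center s by blast
qed

lemma nrm_zero [simp]: "nr 0 = 0"
  by (simp add: nrm_def)

lemma nrm_cj: "nr (cj x) = cj x \<odot> x"
  by (simp add: nrm_def)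

lemma cj_central_cone: "x \<in> CC \<Longrightarrow> cj x \<in> CC"
  unfolding central_cone_def by auto

lemma cj_normal_cone: "x \<in> NN \<Longrightarrow> cj x \<in> NN"
  unfolding normal_cone_def by auto

lemma central_cone_center_units:
  "x \<in> CC \<Longrightarrow> x \<noteq> 0 \<Longrightarrow> nr x \<in> center_units mul e \<and> nr (cj x) \<in> center_units mul e"
  unfolding central_cone_def by auto

lemma center_units_central_cone: "s \<in> center_units mul e \<Longrightarrow> s \<in> CC"
  unfolding central_cone_def
  using center_units_mul_closed cj_center_units by (simp add: nrm_def)

lemma normal_cone_central_cone: "x \<in> NN \<Longrightarrow> x \<in> CC"
  using scaleR_unit_center_units unfolding normal_cone_def central_cone_def by auto

lemma nrm_cj_eq:
  assumes "x \<in> CC"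
  shows "nr (cj x) = nr x"
proof (cases "x = 0")
  case False
  then obtain t where "nr x \<in> center mul" "nr (cj x) \<in> center mul" "t \<odot> nr (cj x) = e"
    using central_cone_center_units[OF assms] unfolding center_units_def is_inverse_def by blast
  then show ?thesis
    using central_products_eq[of x "cj x" "nr x" "nr (cj x)" t] by (simp add: nrm_def)
qed simp

lemma central_cone_inverseE:
  assumes "x \<in> CC" "x \<noteq> 0"
  obtains s where "nr x \<in> center mul" "s \<in> center mul" "nr x \<odot> s = e" "s \<odot> nr x = e"
  using central_cone_center_units[OF assms] unfolding center_units_def is_inverse_def by blast

lemma assoc_cj_eq_0:
  assumes "x \<in> CC"
  shows "associator x (cj x) y = 0"
proof (cases "x = 0")
  case False
  then obtain s where "nr x \<in> center mul" "s \<in> center mul" "s \<odot> nr x = e"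
    using central_cone_inverseE[OF assms] by metis
  then show ?thesis
    using nrm_cj_eq[OF assms] assoc_eq_0_if_central_unit[of x "cj x" "nr x" s] by (simp add: nrm_def)
qed (simp add: assoc_def)

lemma central_cone_inverse:
  assumes "x \<in> CC" "s \<in> center mul" "s \<odot> nr x = e"
  shows "x \<odot> (s \<odot> cj x) = e" "(s \<odot> cj x) \<odot> x = e"
    "associator x (s \<odot> cj x) z = 0" "associator (s \<odot> cj x) x z = 0"
proof -
  show "x \<odot> (s \<odot> cj x) = e"
    using assms(3) center_mul_left_commute[OF assms(2)] by (simp add: nrm_def)
  show "(s \<odot> cj x) \<odot> x = e"
    using assms(3) center_mul_assoc[OF assms(2)] nrm_cj_eq[OF assms(1)] by (simp add: nrm_cj)
  show "associator x (s \<odot> cj x) z = 0"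
    using assoc_center_mul_middle[OF assms(2)] assoc_cj_eq_0[OF assms(1)] by simp
  then show "associator (s \<odot> cj x) x z = 0"
    using assoc_swap_left[of "s \<odot> cj x" x z] by simp
qed

lemma central_cone_inv_el:
  assumes "x \<in> CC" "x \<noteq> 0"
  shows "invertible_el mul e x \<and> inv_el mul e x = inv_el mul e (nr x) \<odot> cj x"
proof -
  obtain s where s: "nr x \<in> center mul" "s \<in> center mul" "nr x \<odot> s = e" "s \<odot> nr x = e"
    using central_cone_inverseE[OF assms] by metis
  note inverse = central_cone_inverse[OF assms(1) s(2,4)]
  have "inv_el mul e (nr x) = s"
    by (rule inv_el_eqI) (use s center_nucleus nucleus_assoc_middle in auto)
  moreover have "inv_el mul e x = s \<odot> cj x"
    by (rule inv_el_eqI) (use inverse in auto)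
  moreover have "invertible_el mul e x"
    unfolding invertible_el_def is_inverse_def using inverse by blast
  ultimately show ?thesis
    by simp
qed

text \<open>With \<open>u = x\<^sup>c\<close>, \<open>w = y\<^sup>c\<close>: Moufang gives \<open>x (x, y, w u) = (x, y, (w u) x) = (x, y, n(x) w) = 0\<close>;
  multiplying on the left by \<open>u\<close> and then by \<open>n(x)\<^sup>-\<^sup>1\<close> removes the factor \<open>x\<close>.\<close>
lemma assoc_cj_mul_cj_eq_0:
  assumes x: "x \<in> CC" "x \<noteq> 0" and y: "y \<in> CC"
  shows "associator x y (cj y \<odot> cj x) = 0"
proof -
  obtain s where s: "nr x \<in> center mul" "s \<in> center mul" "s \<odot> nr x = e"
    using central_cone_inverseE[OF x] by metis
  let ?u = "cj x" and ?w = "cj y" and ?a = "nr x"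
  have ux: "?u \<odot> x = ?a"
    using nrm_cj_eq[OF x(1)] by (simp add: nrm_cj)
  have "associator ?w ?u x = 0"
    using assoc_cycle[of ?w ?u x] assoc_swap_left[of ?u x ?w] assoc_cj_eq_0[OF x(1)] by simp
  then have "(?w \<odot> ?u) \<odot> x = ?a \<odot> ?w"
    using ux center_commute[OF s(1)] assoc_eq_0_iff by metis
  moreover have "associator x y (?a \<odot> ?w) = 0"
    using assoc_center_mul_right[OF s(1)] assoc_cycle[of x y ?w] assoc_cj_eq_0[OF y] by simp
  ultimately have "x \<odot> associator x y (?w \<odot> ?u) = 0"
    using assoc_mul_right_Moufang by metis
  then have "?a \<odot> associator x y (?w \<odot> ?u) = 0"
    using ux assoc_swap_left[of ?u x] assoc_cj_eq_0[OF x(1)] assoc_eq_0_iff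
    by (metis minus_zero mul_zero_right)
  then show ?thesis
    using s center_mul_assoc by (metis mul_unit_left mul_zero_right)
qed

lemma nrm_mul:
  assumes x: "x \<in> CC" and y: "y \<in> CC"
  shows "nr (x \<odot> y) = nr x \<odot> nr y"
proof (cases "x = 0 \<or> y = 0")
  case False
  have b: "nr y \<in> center mul"
    using central_cone_inverseE[OF y] False by metis
  have "nr (x \<odot> y) = (x \<odot> y) \<odot> (cj y \<odot> cj x)"
    by (simp add: nrm_def cj_mul)
  also have "\<dots> = x \<odot> (y \<odot> (cj y \<odot> cj x))"
    using assoc_cj_mul_cj_eq_0[OF x] False y assoc_eq_0_iff by blast
  also have "y \<odot> (cj y \<odot> cj x) = nr y \<odot> cj x"
    using assoc_cj_eq_0[OF y] assoc_eq_0_iff by (metis nrm_def)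
  also have "x \<odot> (nr y \<odot> cj x) = nr x \<odot> nr y"
    using center_mul_left_commute[OF b] center_commute[OF b] by (simp add: nrm_def)
  finally show ?thesis .
qed auto

lemma nrm_mul_commute:
  assumes "x \<in> CC" "y \<in> CC"
  shows "nr x \<odot> nr y = nr y \<odot> nr x"
proof (cases "x = 0")
  case False
  then have "nr x \<in> center mul"
    using central_cone_inverseE[OF assms(1)] by metis
  then show ?thesis
    by (rule center_commute)
qed simp

lemma central_cone_mul_closed:
  assumes x: "x \<in> CC" and y: "y \<in> CC"
  shows "x \<odot> y \<in> CC"
proof (cases "x = 0 \<or> y = 0")
  case False
  note units_x = central_cone_center_units[OF x] and units_y = central_cone_center_units[OF y]
  have "nr (x \<odot> y) \<in> center_units mul e"
    using nrm_mul[OF x y] units_x units_y False center_units_mul_closed by simp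
  moreover have "nr (cj (x \<odot> y)) = nr (cj y) \<odot> nr (cj x)"
    using nrm_mul[OF cj_central_cone[OF y] cj_central_cone[OF x]] by (simp add: cj_mul)
  then have "nr (cj (x \<odot> y)) \<in> center_units mul e"
    using units_x units_y False center_units_mul_closed by simp
  ultimately show ?thesis
    unfolding central_cone_def by simp
qed (auto simp: central_cone_def)

lemma central_cone_mul_nonzero:
  assumes x: "x \<in> CC" "x \<noteq> 0" and "y \<noteq> 0"
  shows "x \<odot> y \<noteq> 0"
proof
  assume xy: "x \<odot> y = 0"
  obtain s where s: "s \<in> center mul" "s \<odot> nr x = e"
    using central_cone_inverseE[OF x] by metis
  have "((s \<odot> cj x) \<odot> x) \<odot> y = (s \<odot> cj x) \<odot> (x \<odot> y)"
    using central_cone_inverse(4)[OF x(1) s] unfolding assoc_eq_0_iff .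
  then have "y = (s \<odot> cj x) \<odot> (x \<odot> y)"
    using central_cone_inverse(2)[OF x(1) s] by simp
  with xy \<open>y \<noteq> 0\<close> show False
    by simp
qed

lemma normal_cone_mul_closed:
  assumes x: "x \<in> NN" and y: "y \<in> NN"
  shows "x \<odot> y \<in> NN"
proof (cases "x = 0 \<or> y = 0")
  case False
  obtain r1 r2 r3 r4 where r: "nr x = r1 *\<^sub>R e" "nr (cj x) = r2 *\<^sub>R e" "nr y = r3 *\<^sub>R e"
    "nr (cj y) = r4 *\<^sub>R e" "r1 \<noteq> 0" "r2 \<noteq> 0" "r3 \<noteq> 0" "r4 \<noteq> 0"
    using x y False unfolding normal_cone_def by auto
  have "nr (x \<odot> y) = (r1 * r3) *\<^sub>R e"
    using nrm_mul[OF normal_cone_central_cone[OF x] normal_cone_central_cone[OF y]] r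
    by (simp add: mul_scaleR_left mul_scaleR_right)
  moreover have "nr (cj (x \<odot> y)) = (r4 * r2) *\<^sub>R e"
    using nrm_mul[OF cj_central_cone cj_central_cone, OF normal_cone_central_cone[OF y]
        normal_cone_central_cone[OF x]] r
    by (simp add: mul_scaleR_left mul_scaleR_right cj_mul)
  ultimately show ?thesis
    unfolding normal_cone_def using r by auto
qed (auto simp: normal_cone_def)

lemma normal_cone_scaleR:
  assumes "x \<in> NN" "t \<noteq> 0"
  shows "t *\<^sub>R x \<in> NN"
proof (cases "x = 0")
  case False
  then obtain r1 r2 where r: "nr x = r1 *\<^sub>R e" "nr (cj x) = r2 *\<^sub>R e" "r1 \<noteq> 0" "r2 \<noteq> 0"
    using assms unfolding normal_cone_def by auto
  have "nr (t *\<^sub>R x) = (t * t * r1) *\<^sub>R e" "nr (cj (t *\<^sub>R x)) = (t * t * r2) *\<^sub>R e"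
    using r by (simp_all add: nrm_def cj_scaleR mul_scaleR_left mul_scaleR_right)
  then show ?thesis
    unfolding normal_cone_def using r assms by auto
qed (simp add: normal_cone_def)

lemma unit_central_cone: "e \<in> CC"
  using center_units_central_cone scaleR_unit_center_units[of 1] by simp

lemma unit_normal_cone: "e \<in> NN"
  unfolding normal_cone_def by (auto simp: nrm_def intro: exI[of _ 1])

lemma is_loop_central_cone: "is_loop (CC - {0}) mul"
proof (rule is_loopI_nuclear_inverses)
  show "\<forall>a\<in>CC - {0}. \<forall>b\<in>CC - {0}. a \<odot> b \<in> CC - {0}"
    using central_cone_mul_closed central_cone_mul_nonzero by auto
  show "e \<in> CC - {0}"
    using unit_central_cone unit_nonzero by simp
  fix a assume a: "a \<in> CC - {0}"
  then obtain s where s: "nr a \<in> center mul" "s \<in> center mul" "nr a \<odot> s = e" "s \<odot> nr a = e"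
    using central_cone_inverseE by blast
  note inverse = central_cone_inverse[of a s] 
  have "s \<in> center_units mul e"
    using s unfolding center_units_def is_inverse_def by blast
  then have "s \<odot> cj a \<in> CC"
    using a center_units_central_cone central_cone_mul_closed cj_central_cone by blast
  moreover have "s \<odot> cj a \<noteq> 0"
    using inverse(1) a s unit_nonzero by auto
  ultimately show "\<exists>v\<in>CC - {0}. a \<odot> v = e \<and> v \<odot> a = e \<and> (\<forall>z. associator a v z = 0)"
    using inverse a s by blast
qed

lemma is_loop_normal_cone: "is_loop (NN - {0}) mul"
proof (rule is_loopI_nuclear_inverses)
  show "\<forall>a\<in>NN - {0}. \<forall>b\<in>NN - {0}. a \<odot> b \<in> NN - {0}"
    using normal_cone_mul_closed central_cone_mul_nonzero normal_cone_central_cone by auto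
  show "e \<in> NN - {0}"
    using unit_normal_cone unit_nonzero by simp
  fix a assume a: "a \<in> NN - {0}"
  then obtain r where r: "nr a = r *\<^sub>R e" "r \<noteq> 0"
    unfolding normal_cone_def by auto
  let ?s = "inverse r *\<^sub>R e"
  have s: "?s \<in> center mul" "?s \<odot> nr a = e"
    using scaleR_unit_center r by (simp_all add: mul_scaleR_left)
  note inverse = central_cone_inverse[OF normal_cone_central_cone s]
  have "?s \<odot> cj a = inverse r *\<^sub>R cj a"
    by (simp add: mul_scaleR_left)
  then have "?s \<odot> cj a \<in> NN"
    using normal_cone_scaleR[OF cj_normal_cone] a r by simp
  moreover have "?s \<odot> cj a \<noteq> 0"
    using inverse(1) a unit_nonzero by auto
  ultimately show "\<exists>v\<in>NN - {0}. a \<odot> v = e \<and> v \<odot> a = e \<and> (\<forall>z. associator a v z = 0)"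
    using inverse a by blast
qed

end

lemma alternative_star_algebra_if_alt_star_alg:
  "alt_star_alg mul e cj \<Longrightarrow> alternative_star_algebra mul e cj"
  unfolding alt_star_alg_def by unfold_locales auto

theorem theorem1p7:
  fixes mul :: "'a::real_vector \<Rightarrow> 'a \<Rightarrow> 'a" and e :: 'a and cj :: "'a \<Rightarrow> 'a"
  assumes A: "alt_star_alg mul e cj"
  shows
    "(\<forall>x \<in> central_cone mul e cj.
        nrm mul cj x = nrm mul cj (cj x)
      \<and> (x \<noteq> 0 \<longrightarrow> invertible_el mul e x \<and>
            inv_el mul e x = mul (inv_el mul e (nrm mul cj x)) (cj x))
      \<and> (\<forall>y. assoc mul x (cj x) y = 0)
      \<and> (\<forall>y \<in> central_cone mul e cj.
            nrm mul cj (mul x y) = mul (nrm mul cj x) (nrm mul cj y)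
          \<and> mul (nrm mul cj x) (nrm mul cj y) = mul (nrm mul cj y) (nrm mul cj x)
          \<and> mul (nrm mul cj y) (nrm mul cj x) = nrm mul cj (mul y x)))
   \<and> (\<forall>x \<in> central_cone mul e cj. \<forall>y \<in> central_cone mul e cj. mul x y \<in> central_cone mul e cj)
   \<and> (\<forall>x \<in> normal_cone mul e cj. \<forall>y \<in> normal_cone mul e cj. mul x y \<in> normal_cone mul e cj)
   \<and> is_loop (central_cone mul e cj - {0}) mul
   \<and> is_loop (normal_cone mul e cj - {0}) mul"
proof -
  interpret alternative_star_algebra mul e cj
    using A by (rule alternative_star_algebra_if_alt_star_alg)
  show ?thesis
    using nrm_cj_eq central_cone_inv_el assoc_cj_eq_0 nrm_mul nrm_mul_commute
      central_cone_mul_closed normal_cone_mul_closed is_loop_central_cone is_loop_normal_cone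
    by simp
qed

end
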